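(* Let $n$ be a positive integer and let $T$ be a strongly connected tournament on $n$ vertices which is not isomorphic to $D_n$, and let $k>1$ be an integer. Then $P(T;k)<P(D_n;k)$. Here $D_n$ is the tournament on $\{v_1,\ldots,v_n\}$ in which, for $1\le i<j\le n$ with $(i,j)\ne(1,n)$, the edge between $v_i$ and $v_j$ is directed from $v_i$ to $v_j$, and the edge between $v_1$ and $v_n$ is directed from $v_n$ to $v_1$.
   Context: A tournament is an orientation of a complete graph; it is strongly connected if for any two vertices there is a directed path from each to the other. For a positive integer $k$, a proper $k$-coloring of a digraph $D$ is a map $c:V(D)\to\{1,\ldots,k\}$ such that each color class induces a subdigraph with no directed cycle; $P(D;k)$ denotes the number of proper $k$-colorings of $D$. *)

theory Defs
  imports Main "HOL-Library.FuncSet"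
begin

definition tournament :: "'a set \<Rightarrow> 'a rel \<Rightarrow> bool" where
  "tournament V A \<longleftrightarrow> A \<subseteq> V \<times> V \<and> (\<forall>v\<in>V. (v, v) \<notin> A) \<and>
     (\<forall>u\<in>V. \<forall>v\<in>V. u \<noteq> v \<longrightarrow> ((u, v) \<in> A \<longleftrightarrow> (v, u) \<notin> A))"

definition strongly_connected :: "'a set \<Rightarrow> 'a rel \<Rightarrow> bool" where
  "strongly_connected V A \<longleftrightarrow> (\<forall>u\<in>V. \<forall>v\<in>V. (u, v) \<in> (A \<inter> V \<times> V)\<^sup>*)"

definition proper_coloring :: "'a set \<Rightarrow> 'a rel \<Rightarrow> nat \<Rightarrow> ('a \<Rightarrow> nat) \<Rightarrow> bool" where
  "proper_coloring V A k c \<longleftrightarrow> (\<forall>v\<in>V. c v \<in> {1..k}) \<and>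
     (\<forall>i\<in>{1..k}. acyclic (A \<inter> ({v\<in>V. c v = i} \<times> {v\<in>V. c v = i})))"

definition chrom_poly :: "'a set \<Rightarrow> 'a rel \<Rightarrow> nat \<Rightarrow> nat" where
  "chrom_poly V A k = card {c \<in> V \<rightarrow>\<^sub>E {1..k}. proper_coloring V A k c}"

definition D_arcs :: "nat \<Rightarrow> nat rel" where
  "D_arcs n = {(i, j). i \<in> {1..n} \<and> j \<in> {1..n} \<and>
      ((i < j \<and> (i, j) \<noteq> (1, n)) \<or> (i = n \<and> j = 1 \<and> 1 < n))}"

definition digraph_iso :: "'a set \<Rightarrow> 'a rel \<Rightarrow> 'b set \<Rightarrow> 'b rel \<Rightarrow> bool" where
  "digraph_iso V A W B \<longleftrightarrow> (\<exists>f. bij_betw f V W \<and>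
      (\<forall>u\<in>V. \<forall>v\<in>V. (u, v) \<in> A \<longleftrightarrow> (f u, f v) \<in> B))"

end

theory Submission
  imports Defs
begin

text \<open>A colouring of a tournament is proper iff no cyclic triangle is monochromatic. Let \<open>v\<close> lie
  on a cyclic triangle \<open>v \<rightarrow> x \<rightarrow> y \<rightarrow> v\<close>. A proper colouring \<open>g\<close> of \<open>T - v\<close> extends in at
  most \<open>k - 1\<close> ways if \<open>g x = g y\<close> and in at most \<open>k\<close> ways otherwise, whence
  \<open>P(T) \<le> (k - 1) P(T - v) + (k - 1) k^(n - 2)\<close>. By Moon's theorem \<open>v\<close> can be chosen with
  \<open>T - v\<close> strong (or of order 2), so induction gives \<open>P(T) \<le> (k - 1) k^(n - 1) + k (k - 1)^(n - 2)\<close>,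
  and \<open>D\<^sub>n\<close> has at least that many proper colourings. If every cyclic triangle contains the arc
  \<open>x \<rightarrow> y\<close>, the other vertices lie between \<open>y\<close> and \<open>x\<close> and are totally ordered, so \<open>T\<close> is
  isomorphic to \<open>D\<^sub>n\<close>. Otherwise a triangle missing \<open>x\<close> or \<open>y\<close> yields a colouring of \<open>T - v\<close>
  whose number of extensions is strictly below the bound.\<close>

section \<open>Counting functions between finite sets\<close>

lemma card_PiE_insert_filter:
  assumes "y \<notin> S"
  shows "card {c \<in> insert y S \<rightarrow>\<^sub>E K. P c} = card {(i, g) \<in> K \<times> (S \<rightarrow>\<^sub>E K). P (g(y := i))}"
proof -
  let ?upd = "\<lambda>(i, g). g(y := i)"
  have "{c \<in> insert y S \<rightarrow>\<^sub>E K. P c} = ?upd ` {(i, g) \<in> K \<times> (S \<rightarrow>\<^sub>E K). P (g(y := i))}"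
    by (auto simp: PiE_insert_eq)
  moreover have "inj_on ?upd {(i, g) \<in> K \<times> (S \<rightarrow>\<^sub>E K). P (g(y := i))}"
    using inj_combinator[OF assms, of "\<lambda>_. K"] by (rule inj_on_subset) auto
  ultimately show ?thesis by (simp add: card_image)
qed

lemma card_PiE_insert_filter_sum:
  assumes "y \<notin> S" "finite S" "finite K"
  shows "card {c \<in> insert y S \<rightarrow>\<^sub>E K. P c} = (\<Sum>g\<in>S \<rightarrow>\<^sub>E K. card {i \<in> K. P (g(y := i))})"
proof -
  have "{(i, g) \<in> K \<times> (S \<rightarrow>\<^sub>E K). P (g(y := i))} = prod.swap ` (SIGMA g:S \<rightarrow>\<^sub>E K. {i \<in> K. P (g(y := i))})"
    by auto
  then show ?thesis
    using assms by (simp add: card_PiE_insert_filter card_image finite_PiE)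
qed

lemma card_PiE_insert_filter_sum_values:
  assumes "y \<notin> S" "finite S" "finite K"
  shows "card {c \<in> insert y S \<rightarrow>\<^sub>E K. P c} = (\<Sum>i\<in>K. card {g \<in> S \<rightarrow>\<^sub>E K. P (g(y := i))})"
proof -
  have "{(i, g) \<in> K \<times> (S \<rightarrow>\<^sub>E K). P (g(y := i))} = (SIGMA i:K. {g \<in> S \<rightarrow>\<^sub>E K. P (g(y := i))})"
    by auto
  then show ?thesis
    using assms by (simp add: card_PiE_insert_filter finite_PiE)
qed

lemma card_PiE_neq:
  assumes "finite S" "finite K" "x \<in> S" "y \<in> S" "x \<noteq> y"
  shows "card {c \<in> S \<rightarrow>\<^sub>E K. c x \<noteq> c y} = (card K - 1) * card K ^ (card S - 1)"
proof -
  have "card {c \<in> S \<rightarrow>\<^sub>E K. c x \<noteq> c y} = (\<Sum>g\<in>S - {y} \<rightarrow>\<^sub>E K. card {i \<in> K. g x \<noteq> i})"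
    using card_PiE_insert_filter_sum[of y "S - {y}" K "\<lambda>c. c x \<noteq> c y"] assms
    by (simp add: insert_absorb)
  also have "\<dots> = (\<Sum>g\<in>S - {y} \<rightarrow>\<^sub>E K. card K - 1)"
  proof (rule sum.cong)
    fix g assume "g \<in> S - {y} \<rightarrow>\<^sub>E K"
    then have "g x \<in> K" using assms(3,5) by auto
    then have "{i \<in> K. g x \<noteq> i} = K - {g x}" by auto
    then show "card {i \<in> K. g x \<noteq> i} = card K - 1" using \<open>g x \<in> K\<close> assms(2) by simp
  qed simp
  finally show ?thesis using assms by (simp add: card_PiE)
qed

lemma card_PiE_eq_avoiding:
  assumes "finite S" "finite K" "x \<in> S" "y \<in> S" "x \<noteq> y"
  shows "card {c \<in> S \<rightarrow>\<^sub>E K. c x = c y \<and> (\<forall>z\<in>S - {x, y}. c z \<noteq> c x)}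
           = card K * (card K - 1) ^ (card S - 2)"
proof -
  define M where "M = S - {x, y}"
  have S: "S = insert y (insert x M)" and "x \<notin> M" "y \<notin> M" "finite M"
    using assms unfolding M_def by auto
  have "card {c \<in> S \<rightarrow>\<^sub>E K. c x = c y \<and> (\<forall>z\<in>M. c z \<noteq> c x)}
      = (\<Sum>g\<in>insert x M \<rightarrow>\<^sub>E K. card {i \<in> K. g x = i \<and> (\<forall>z\<in>M. g z \<noteq> g x)})"
    unfolding S using assms \<open>y \<notin> M\<close> \<open>finite M\<close>
    by (subst card_PiE_insert_filter_sum) (auto intro!: sum.cong arg_cong[where f = card])
  also have "\<dots> = (\<Sum>g\<in>insert x M \<rightarrow>\<^sub>E K. if \<forall>z\<in>M. g z \<noteq> g x then 1 else 0)"
  proof (rule sum.cong)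
    fix g assume "g \<in> insert x M \<rightarrow>\<^sub>E K"
    then have "{i \<in> K. g x = i \<and> (\<forall>z\<in>M. g z \<noteq> g x)}
        = (if \<forall>z\<in>M. g z \<noteq> g x then {g x} else {})" by auto
    then show "card {i \<in> K. g x = i \<and> (\<forall>z\<in>M. g z \<noteq> g x)}
        = (if \<forall>z\<in>M. g z \<noteq> g x then 1 else 0)" by simp
  qed simp
  also have "\<dots> = card {g \<in> insert x M \<rightarrow>\<^sub>E K. \<forall>z\<in>M. g z \<noteq> g x}"
    using \<open>finite M\<close> assms(2) by (simp add: sum.If_cases finite_PiE Int_def)
  also have "\<dots> = (\<Sum>i\<in>K. card {h \<in> M \<rightarrow>\<^sub>E K. \<forall>z\<in>M. h z \<noteq> i})"
    using \<open>x \<notin> M\<close> \<open>finite M\<close> assms(2)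
    by (subst card_PiE_insert_filter_sum_values) (auto intro!: sum.cong arg_cong[where f = card])
  also have "\<dots> = (\<Sum>i\<in>K. card (M \<rightarrow>\<^sub>E K - {i}))"
    by (rule sum.cong) (auto intro!: arg_cong[where f = card] simp: PiE_iff extensional_def)
  also have "\<dots> = card K * (card K - 1) ^ (card S - 2)"
    using assms \<open>finite M\<close> by (simp add: card_PiE M_def card_Diff_subset numeral_2_eq_2)
  finally show ?thesis unfolding M_def .
qed

section \<open>Tournaments and cyclic triangles\<close>

definition cyclic_triangle :: "'a rel \<Rightarrow> 'a \<Rightarrow> 'a \<Rightarrow> 'a \<Rightarrow> bool" where
  "cyclic_triangle A a b c \<longleftrightarrow> (a, b) \<in> A \<and> (b, c) \<in> A \<and> (c, a) \<in> A"

lemma cyclic_triangle_rotate: "cyclic_triangle A a b c \<Longrightarrow> cyclic_triangle A b c a"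
  unfolding cyclic_triangle_def by blast

lemma tournament_arcD: "tournament V A \<Longrightarrow> (a, b) \<in> A \<Longrightarrow> a \<in> V \<and> b \<in> V"
  unfolding tournament_def by blast

lemma tournament_irrefl: "tournament V A \<Longrightarrow> (a, a) \<notin> A"
  unfolding tournament_def by blast

lemma tournament_asym: "tournament V A \<Longrightarrow> (a, b) \<in> A \<Longrightarrow> (b, a) \<notin> A"
  unfolding tournament_def by (cases "a = b") blast+

lemma tournament_total:
  "tournament V A \<Longrightarrow> a \<in> V \<Longrightarrow> b \<in> V \<Longrightarrow> a \<noteq> b \<Longrightarrow> (a, b) \<in> A \<or> (b, a) \<in> A"
  unfolding tournament_def by blast

lemma tournament_induced: "tournament V A \<Longrightarrow> S \<subseteq> V \<Longrightarrow> tournament S (A \<inter> S \<times> S)"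
  unfolding tournament_def by blast

lemma cyclic_triangle_through:
  assumes "cyclic_triangle A a b c" "v \<in> {a, b, c}"
  shows "\<exists>p q. cyclic_triangle A v p q \<and> {v, p, q} = {a, b, c}"
  using assms cyclic_triangle_rotate[OF assms(1)] cyclic_triangle_rotate[OF cyclic_triangle_rotate[OF assms(1)]]
  by auto

lemma cyclic_triangle_vertices:
  assumes "tournament V A" "cyclic_triangle A a b c"
  shows "a \<in> V" "b \<in> V" "c \<in> V" "a \<noteq> b" "b \<noteq> c" "c \<noteq> a"
  using assms tournament_arcD tournament_irrefl unfolding cyclic_triangle_def by metis+

text \<open>A shortest cycle of a semicomplete asymmetric relation is a triangle: a chord from the
  first to the third vertex of a longer cycle either closes a triangle or shortens the cycle.\<close>
lemma relpow_cycle_imp_cyclic_triangle: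
  assumes asym: "\<And>a b. (a, b) \<in> R \<Longrightarrow> (b, a) \<notin> R"
    and total: "\<And>a b. a \<in> Field R \<Longrightarrow> b \<in> Field R \<Longrightarrow> a \<noteq> b \<Longrightarrow> (a, b) \<in> R \<or> (b, a) \<in> R"
  shows "(a, a) \<in> R ^^ n \<Longrightarrow> n > 0 \<Longrightarrow> \<exists>x y z. cyclic_triangle R x y z"
proof (induction n arbitrary: a rule: less_induct)
  case (less n)
  then obtain m where n: "n = Suc m" by (cases n) auto
  with less.prems obtain b where ab: "(a, b) \<in> R" and ba: "(b, a) \<in> R ^^ m"
    using relpow_Suc_D2 by metis
  obtain l where m: "m = Suc l"
    using ba ab asym by (cases m) auto
  with ba obtain d where bd: "(b, d) \<in> R" and da: "(d, a) \<in> R ^^ l"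
    using relpow_Suc_D2 by metis
  show ?case
  proof (cases "(d, a) \<in> R")
    case True
    then show ?thesis using ab bd unfolding cyclic_triangle_def by blast
  next
    case False
    have "d \<noteq> a" using ab bd asym by auto
    moreover have "a \<in> Field R" "d \<in> Field R" using ab bd by (auto intro: FieldI1 FieldI2)
    ultimately have "(a, d) \<in> R" using total False by blast
    with da have "(a, a) \<in> R ^^ Suc l" using relpow_Suc_I2 by metis
    then show ?thesis using less.IH n m by blast
  qed
qed

lemma acyclic_iff_no_cyclic_triangle:
  assumes "\<And>a b. (a, b) \<in> R \<Longrightarrow> (b, a) \<notin> R"
    and "\<And>a b. a \<in> Field R \<Longrightarrow> b \<in> Field R \<Longrightarrow> a \<noteq> b \<Longrightarrow> (a, b) \<in> R \<or> (b, a) \<in> R"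
  shows "acyclic R \<longleftrightarrow> \<not> (\<exists>x y z. cyclic_triangle R x y z)"
proof
  assume "acyclic R"
  then show "\<not> (\<exists>x y z. cyclic_triangle R x y z)"
    unfolding acyclic_def cyclic_triangle_def by (meson trancl.simps)
next
  assume "\<not> (\<exists>x y z. cyclic_triangle R x y z)"
  then show "acyclic R"
    unfolding acyclic_def using relpow_cycle_imp_cyclic_triangle[OF assms] trancl_power by metis
qed

lemma proper_coloring_iff_no_monochromatic_triangle:
  assumes T: "tournament V A"
  shows "proper_coloring V A k c \<longleftrightarrow> (\<forall>v\<in>V. c v \<in> {1..k}) \<and>
           (\<forall>a b d. cyclic_triangle A a b d \<longrightarrow> \<not> (c a = c b \<and> c b = c d))"
proof -
  have acyclic_class: "acyclic (A \<inter> C \<times> C) \<longleftrightarrow>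
      (\<forall>a b d. cyclic_triangle A a b d \<longrightarrow> \<not> (a \<in> C \<and> b \<in> C \<and> d \<in> C))"
    if "C \<subseteq> V" for C
  proof -
    have "acyclic (A \<inter> C \<times> C) \<longleftrightarrow> \<not> (\<exists>x y z. cyclic_triangle (A \<inter> C \<times> C) x y z)"
    proof (rule acyclic_iff_no_cyclic_triangle)
      show "(b, a) \<notin> A \<inter> C \<times> C" if "(a, b) \<in> A \<inter> C \<times> C" for a b
        using that tournament_asym[OF T] by blast
      show "(a, b) \<in> A \<inter> C \<times> C \<or> (b, a) \<in> A \<inter> C \<times> C"
        if "a \<in> Field (A \<inter> C \<times> C)" "b \<in> Field (A \<inter> C \<times> C)" "a \<noteq> b" for a b
        using that tournament_total[OF T, of a b] \<open>C \<subseteq> V\<close> unfolding Field_def by blast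
    qed
    then show ?thesis unfolding cyclic_triangle_def by blast
  qed
  have "acyclic (A \<inter> {v\<in>V. c v = i} \<times> {v\<in>V. c v = i}) \<longleftrightarrow>
      (\<forall>a b d. cyclic_triangle A a b d \<longrightarrow> \<not> (c a = i \<and> c b = i \<and> c d = i))" for i
    using cyclic_triangle_vertices(1-3)[OF T] by (subst acyclic_class) auto
  moreover have "(\<forall>i\<in>{1..k}. \<forall>a b d. cyclic_triangle A a b d \<longrightarrow> \<not> (c a = i \<and> c b = i \<and> c d = i))
      \<longleftrightarrow> (\<forall>a b d. cyclic_triangle A a b d \<longrightarrow> \<not> (c a = c b \<and> c b = c d))"
    if colors: "\<forall>v\<in>V. c v \<in> {1..k}"
  proof (intro iffI ballI allI impI notI)
    fix a b d assume mono: "\<forall>i\<in>{1..k}. \<forall>a b d. cyclic_triangle A a b d \<longrightarrow> \<not> (c a = i \<and> c b = i \<and> c d = i)"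
      and t: "cyclic_triangle A a b d" and eq: "c a = c b \<and> c b = c d"
    have "c a \<in> {1..k}" using colors cyclic_triangle_vertices(1)[OF T t] by blast
    then show False using mono t eq by metis
  next
    fix i a b d assume "\<forall>a b d. cyclic_triangle A a b d \<longrightarrow> \<not> (c a = c b \<and> c b = c d)"
      and "cyclic_triangle A a b d" "c a = i \<and> c b = i \<and> c d = i"
    then show False by metis
  qed
  ultimately show ?thesis
    unfolding proper_coloring_def by blast
qed

section \<open>Strong tournaments\<close>

lemma strongly_connected_arc_out:
  assumes SC: "strongly_connected V A" and X: "X \<subseteq> V" "X \<noteq> {}" "X \<noteq> V"
  shows "\<exists>x\<in>X. \<exists>y\<in>V - X. (x, y) \<in> A"
proof (rule ccontr)
  assume closed: "\<not> ?thesis"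
  obtain x y where "x \<in> X" "y \<in> V - X" using X by blast
  moreover have "(x, y) \<in> (A \<inter> V \<times> V)\<^sup>*" using SC X calculation unfolding strongly_connected_def by blast
  then have "x \<in> X \<Longrightarrow> y \<in> X" by (induction rule: rtrancl_induct) (use closed in auto)
  ultimately show False by blast
qed

lemma strongly_connected_vertex_on_triangle:
  assumes T: "tournament V A" and SC: "strongly_connected V A" and "v \<in> V" "w \<in> V" "w \<noteq> v"
  shows "\<exists>x y. cyclic_triangle A v x y"
proof -
  define Out where "Out = {u \<in> V. (v, u) \<in> A}"
  have "Out \<noteq> {}" using strongly_connected_arc_out[OF SC, of "{v}"] assms unfolding Out_def by blast
  moreover have "Out \<subseteq> V" "Out \<noteq> V" using \<open>v \<in> V\<close> tournament_irrefl[OF T] unfolding Out_def by auto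
  ultimately obtain x y where xy: "x \<in> Out" "y \<in> V - Out" "(x, y) \<in> A"
    using strongly_connected_arc_out[OF SC] by blast
  then have "y \<noteq> v" using tournament_asym[OF T] unfolding Out_def by blast
  with xy have "cyclic_triangle A v x y"
    using tournament_total[OF T, of y v] \<open>v \<in> V\<close> unfolding Out_def cyclic_triangle_def by blast
  then show ?thesis by blast
qed

lemma not_strongly_connected_card_2:
  assumes T: "tournament V A" and "card V = 2"
  shows "\<not> strongly_connected V A"
proof
  assume SC: "strongly_connected V A"
  obtain a b where V: "V = {a, b}" "a \<noteq> b" using \<open>card V = 2\<close> unfolding card_2_iff by blast
  then consider "(a, b) \<in> A" | "(b, a) \<in> A" using tournament_total[OF T, of a b] by blast
  then show False
  proof cases
    case 1
    then show False using strongly_connected_arc_out[OF SC, of "{b}"] V tournament_asym[OF T] by auto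
  next
    case 2
    then show False using strongly_connected_arc_out[OF SC, of "{a}"] V tournament_asym[OF T] by auto
  qed
qed

lemma strongly_connected_via_core:
  assumes "S \<subseteq> X" "strongly_connected S (A \<inter> S \<times> S)"
    and to_core: "\<forall>x\<in>X. \<exists>s\<in>S. (x, s) \<in> (A \<inter> X \<times> X)\<^sup>*"
    and from_core: "\<forall>x\<in>X. \<exists>s\<in>S. (s, x) \<in> (A \<inter> X \<times> X)\<^sup>*"
  shows "strongly_connected X (A \<inter> X \<times> X)"
  unfolding strongly_connected_def
proof (intro ballI)
  fix x y assume "x \<in> X" "y \<in> X"
  then obtain s s' where "s \<in> S" "s' \<in> S" and xs: "(x, s) \<in> (A \<inter> X \<times> X)\<^sup>*"
    and sy: "(s', y) \<in> (A \<inter> X \<times> X)\<^sup>*"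
    using to_core from_core by blast
  have "(s, s') \<in> (A \<inter> S \<times> S)\<^sup>*"
    using assms(2) \<open>s \<in> S\<close> \<open>s' \<in> S\<close> unfolding strongly_connected_def by (simp add: Int_absorb2)
  moreover have "A \<inter> S \<times> S \<subseteq> A \<inter> X \<times> X" using assms(1) by blast
  ultimately have "(s, s') \<in> (A \<inter> X \<times> X)\<^sup>*" using rtrancl_mono by blast
  with xs sy show "(x, y) \<in> (A \<inter> X \<times> X \<inter> X \<times> X)\<^sup>*" by (simp add: Int_absorb2)
qed

lemma strong_tournament_arc_to_dominating:
  assumes T: "tournament V A" and SC: "strongly_connected V A"
    and S: "S \<subseteq> V" "S \<noteq> {}" "S \<noteq> V"
    and unmixed: "\<forall>q\<in>V - S. (\<forall>s\<in>S. (s, q) \<in> A) \<or> (\<forall>s\<in>S. (q, s) \<in> A)"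
  shows "\<exists>w\<in>V - S. \<exists>u\<in>V - S. (\<forall>s\<in>S. (s, w) \<in> A) \<and> (\<forall>s\<in>S. (u, s) \<in> A) \<and> (w, u) \<in> A"
proof -
  define W where "W = {w \<in> V - S. \<forall>s\<in>S. (s, w) \<in> A}"
  define U where "U = {u \<in> V - S. \<forall>s\<in>S. (u, s) \<in> A}"
  have VSWU: "V - S = W \<union> U" using unmixed unfolding W_def U_def by blast
  obtain q s where "q \<in> V - S" "s \<in> S" "(q, s) \<in> A"
    using strongly_connected_arc_out[OF SC, of "V - S"] S by blast
  then have "q \<notin> S \<union> W" using tournament_asym[OF T] unfolding W_def by blast
  then have "S \<union> W \<noteq> V" using \<open>q \<in> V - S\<close> by blast
  then obtain p u where p: "p \<in> S \<union> W" and u: "u \<in> V - (S \<union> W)" and pu: "(p, u) \<in> A"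
    using strongly_connected_arc_out[OF SC, of "S \<union> W"] S unfolding W_def by blast
  have "u \<in> U" using u VSWU by blast
  then have "p \<notin> S" using pu tournament_asym[OF T] unfolding U_def by blast
  with p have "p \<in> W" by blast
  with \<open>u \<in> U\<close> pu show ?thesis unfolding W_def U_def by blast
qed

lemma rtrancl_induced_arc: "(a, b) \<in> A \<Longrightarrow> a \<in> X \<Longrightarrow> b \<in> X \<Longrightarrow> (a, b) \<in> (A \<inter> X \<times> X)\<^sup>*"
  by blast

lemma rtrancl_induced_two_arcs:
  "(a, b) \<in> A \<Longrightarrow> (b, c) \<in> A \<Longrightarrow> a \<in> X \<Longrightarrow> b \<in> X \<Longrightarrow> c \<in> X \<Longrightarrow> (a, c) \<in> (A \<inter> X \<times> X)\<^sup>*"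
  by (rule converse_rtrancl_into_rtrancl[of a b]) auto

lemma strongly_connected_singleton: "strongly_connected {w} (A \<inter> {w} \<times> {w})"
  unfolding strongly_connected_def by simp

lemma strongly_connected_insert:
  assumes "strongly_connected S (A \<inter> S \<times> S)" "s1 \<in> S" "s2 \<in> S" "(q, s1) \<in> A" "(s2, q) \<in> A"
  shows "strongly_connected (insert q S) (A \<inter> insert q S \<times> insert q S)"
  by (rule strongly_connected_via_core[OF _ assms(1)]) (use assms(2-) in \<open>auto intro: rtrancl_induced_arc\<close>)

text \<open>No strong connectivity of \<open>S\<close> is needed: every vertex reaches \<open>w\<close> through \<open>u \<rightarrow> s \<rightarrow> w\<close>
  and is reached from \<open>w\<close> through \<open>w \<rightarrow> u \<rightarrow> s\<close>.\<close>
lemma strongly_connected_dominating_pair: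
  assumes "s \<in> S" and w: "\<forall>s\<in>S. (s, w) \<in> A" and u: "\<forall>s\<in>S. (u, s) \<in> A" and "(w, u) \<in> A"
  defines "X \<equiv> S \<union> {w, u}"
  shows "strongly_connected X (A \<inter> X \<times> X)"
proof (rule strongly_connected_via_core[OF _ strongly_connected_singleton])
  have reach: "(x, w) \<in> (A \<inter> X \<times> X)\<^sup>* \<and> (w, x) \<in> (A \<inter> X \<times> X)\<^sup>*" if x: "x \<in> X" for x
  proof -
    consider "x \<in> S" | "x = u" | "x = w" using x unfolding X_def by blast
    then show ?thesis
    proof cases
      case 1
      have "(x, w) \<in> (A \<inter> X \<times> X)\<^sup>*"
        by (rule rtrancl_induced_arc) (use 1 w in \<open>auto simp: X_def\<close>)
      moreover have "(w, x) \<in> (A \<inter> X \<times> X)\<^sup>*"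
        by (rule rtrancl_induced_two_arcs[of w u]) (use 1 u \<open>(w, u) \<in> A\<close> in \<open>auto simp: X_def\<close>)
      ultimately show ?thesis ..
    next
      case 2
      have "(x, w) \<in> (A \<inter> X \<times> X)\<^sup>*"
        by (rule rtrancl_induced_two_arcs[of x s]) (use 2 u w \<open>s \<in> S\<close> in \<open>auto simp: X_def\<close>)
      moreover have "(w, x) \<in> (A \<inter> X \<times> X)\<^sup>*"
        by (rule rtrancl_induced_arc) (use 2 \<open>(w, u) \<in> A\<close> in \<open>auto simp: X_def\<close>)
      ultimately show ?thesis ..
    qed simp
  qed
  show "{w} \<subseteq> X" unfolding X_def by simp
  show "\<forall>x\<in>X. \<exists>s\<in>{w}. (x, s) \<in> (A \<inter> X \<times> X)\<^sup>*" using reach by simp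
  show "\<forall>x\<in>X. \<exists>s\<in>{w}. (s, x) \<in> (A \<inter> X \<times> X)\<^sup>*" using reach by simp
qed

lemma strong_tournament_grow:
  assumes T: "tournament V A" and SC: "strongly_connected V A" and "finite V" "card V \<ge> 4"
    and S: "S \<subseteq> V" "S \<noteq> {}" "card S + 2 \<le> card V" and SS: "strongly_connected S (A \<inter> S \<times> S)"
  shows "(\<exists>S'. S \<subset> S' \<and> S' \<subset> V \<and> strongly_connected S' (A \<inter> S' \<times> S')) \<or>
         (\<exists>v\<in>V. strongly_connected (V - {v}) (A \<inter> (V - {v}) \<times> (V - {v})))"
proof (cases "\<exists>q\<in>V - S. \<exists>s1\<in>S. \<exists>s2\<in>S. (q, s1) \<in> A \<and> (s2, q) \<in> A")
  case True
  then obtain q s1 s2 where q: "q \<in> V - S" and s: "s1 \<in> S" "s2 \<in> S" "(q, s1) \<in> A" "(s2, q) \<in> A"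
    by blast
  have "strongly_connected (insert q S) (A \<inter> insert q S \<times> insert q S)"
    by (rule strongly_connected_insert[OF SS s])
  moreover have "card (insert q S) < card V"
    using q S \<open>finite V\<close> finite_subset by fastforce
  ultimately show ?thesis using q S by auto
next
  case False
  have "finite S" using S \<open>finite V\<close> finite_subset by blast
  then have "S \<noteq> V" using S by auto
  have "\<forall>q\<in>V - S. (\<forall>s\<in>S. (s, q) \<in> A) \<or> (\<forall>s\<in>S. (q, s) \<in> A)"
    using False tournament_total[OF T] S by blast
  then obtain w u where wu: "w \<in> V - S" "u \<in> V - S" "(w, u) \<in> A"
    and w: "\<forall>s\<in>S. (s, w) \<in> A" and u: "\<forall>s\<in>S. (u, s) \<in> A"
    using strong_tournament_arc_to_dominating[OF T SC S(1,2) \<open>S \<noteq> V\<close>] by blast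
  obtain s0 where "s0 \<in> S" using S by blast
  show ?thesis
  proof (cases "S \<union> {w, u} = V")
    case False
    moreover have "S \<subset> S \<union> {w, u}" "S \<union> {w, u} \<subseteq> V" using wu S by auto
    moreover have "strongly_connected (S \<union> {w, u}) (A \<inter> (S \<union> {w, u}) \<times> (S \<union> {w, u}))"
      using strongly_connected_dominating_pair[OF \<open>s0 \<in> S\<close> w u wu(3)] .
    ultimately show ?thesis by blast
  next
    case True
    moreover have "w \<noteq> u" using wu tournament_irrefl[OF T] by blast
    ultimately have "card V = card S + 2" using wu \<open>finite S\<close> by auto
    then have "card (S - {s0}) \<noteq> 0" using \<open>card V \<ge> 4\<close> \<open>s0 \<in> S\<close> \<open>finite S\<close> by simp
    then obtain t where "t \<in> S - {s0}" by (metis card.empty ex_in_conv)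
    moreover have "V - {s0} = (S - {s0}) \<union> {w, u}" using True wu \<open>s0 \<in> S\<close> by auto
    ultimately have "strongly_connected (V - {s0}) (A \<inter> (V - {s0}) \<times> (V - {s0}))"
      using strongly_connected_dominating_pair[of t "S - {s0}" w A u] w u wu(3) by simp
    then show ?thesis using \<open>s0 \<in> S\<close> S by blast
  qed
qed

text \<open>Moon's theorem, by growing a strong proper subtournament until it misses one vertex.\<close>
theorem strong_tournament_remove_vertex:
  assumes T: "tournament V A" and SC: "strongly_connected V A" and "finite V" "card V \<ge> 4"
  shows "\<exists>v\<in>V. strongly_connected (V - {v}) (A \<inter> (V - {v}) \<times> (V - {v}))"
proof -
  have grow: "\<exists>v\<in>V. strongly_connected (V - {v}) (A \<inter> (V - {v}) \<times> (V - {v}))"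
    if "S \<subset> V" "S \<noteq> {}" "strongly_connected S (A \<inter> S \<times> S)" for S
    using that
  proof (induction "card V - card S" arbitrary: S rule: less_induct)
    case less
    have "finite S" using less.prems(1) \<open>finite V\<close> by (meson finite_subset psubset_imp_subset)
    have "card S < card V" using \<open>finite V\<close> less.prems(1) by (rule psubset_card_mono)
    then consider (last) "card S + 1 = card V" | (more) "card S + 2 \<le> card V" by linarith
    then show ?case
    proof cases
      case last
      then have "card (V - S) = 1" using \<open>finite S\<close> less.prems(1) by (simp add: card_Diff_subset)
      then obtain v where "V - S = {v}" by (rule card_1_singletonE)
      then have "v \<in> V" "V - {v} = S" using less.prems(1) by auto
      then show ?thesis using less.prems(3) by (intro bexI[of _ v]) simp_all
    next
      case more
      then consider S' where "S \<subset> S'" "S' \<subset> V" "strongly_connected S' (A \<inter> S' \<times> S')"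
        | "\<exists>v\<in>V. strongly_connected (V - {v}) (A \<inter> (V - {v}) \<times> (V - {v}))"
        using strong_tournament_grow[OF T SC \<open>finite V\<close> \<open>card V \<ge> 4\<close> _ less.prems(2) more less.prems(3)]
          less.prems(1) by blast
      then show ?thesis
      proof cases
        case 1
        have "card S < card S'"
          using 1 \<open>finite V\<close> by (meson psubset_card_mono finite_subset psubset_imp_subset)
        then have "card V - card S' < card V - card S" using \<open>card S < card V\<close> by linarith
        then show ?thesis by (rule less.hyps) (use 1 in auto)
      qed simp
    qed
  qed
  obtain w where "w \<in> V" using \<open>card V \<ge> 4\<close> by fastforce
  moreover have "V \<noteq> {w}" using \<open>card V \<ge> 4\<close> by auto
  ultimately have "{w} \<subset> V" by blast
  then show ?thesis by (rule grow[OF _ _ strongly_connected_singleton]) simp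
qed

lemma strong_tournament_deletable_triangle_vertex:
  assumes T: "tournament V A" and SC: "strongly_connected V A" and "finite V" "card V \<ge> 3"
  obtains v x y where "cyclic_triangle A v x y"
    and "card (V - {v}) = 2 \<or> strongly_connected (V - {v}) (A \<inter> (V - {v}) \<times> (V - {v}))"
proof -
  obtain v where v: "v \<in> V"
    and del: "card (V - {v}) = 2 \<or> strongly_connected (V - {v}) (A \<inter> (V - {v}) \<times> (V - {v}))"
  proof (cases "card V = 3")
    case True
    obtain v where "v \<in> V" using \<open>card V \<ge> 3\<close> by fastforce
    moreover have "card (V - {v}) = 2" using calculation True \<open>finite V\<close> by simp
    ultimately show ?thesis using that by blast
  next
    case False
    then have "card V \<ge> 4" using \<open>card V \<ge> 3\<close> by simp
    then obtain v where "v \<in> V" "strongly_connected (V - {v}) (A \<inter> (V - {v}) \<times> (V - {v}))"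
      using strong_tournament_remove_vertex[OF T SC \<open>finite V\<close>] by blast
    then show ?thesis using that by blast
  qed
  have "card (V - {v}) \<noteq> 0" using v \<open>finite V\<close> \<open>card V \<ge> 3\<close> by simp
  then have "V - {v} \<noteq> {}" by (metis card.empty)
  then obtain w where "w \<in> V" "w \<noteq> v" by blast
  then obtain x y where "cyclic_triangle A v x y"
    using strongly_connected_vertex_on_triangle[OF T SC v] by blast
  then show ?thesis using del by (rule that)
qed

section \<open>Deleting a vertex on a cyclic triangle\<close>

lemma proper_coloring_induced:
  "proper_coloring V A k c \<Longrightarrow> S \<subseteq> V \<Longrightarrow> proper_coloring S (A \<inter> S \<times> S) k c"
  unfolding proper_coloring_def by (blast intro: acyclic_subset)

lemma proper_coloring_cong:
  "(\<And>v. v \<in> V \<Longrightarrow> c v = c' v) \<Longrightarrow> proper_coloring V A k c \<longleftrightarrow> proper_coloring V A k c'"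
proof -
  assume "\<And>v. v \<in> V \<Longrightarrow> c v = c' v"
  then have "{v \<in> V. c v = i} = {v \<in> V. c' v = i}" for i by auto
  with \<open>\<And>v. v \<in> V \<Longrightarrow> c v = c' v\<close> show ?thesis unfolding proper_coloring_def by auto
qed

lemma chrom_poly_sum_extensions:
  assumes "finite V" "v \<in> V"
  shows "chrom_poly V A k = (\<Sum>g\<in>V - {v} \<rightarrow>\<^sub>E {1..k}. card {i \<in> {1..k}. proper_coloring V A k (g(v := i))})"
  using card_PiE_insert_filter_sum[of v "V - {v}" "{1..k}" "proper_coloring V A k"] assms
  unfolding chrom_poly_def by (simp add: insert_absorb)

lemma proper_extensions_empty:
  assumes "v \<in> V" "\<not> proper_coloring (V - {v}) (A \<inter> (V - {v}) \<times> (V - {v})) k g"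
  shows "{i \<in> {1..k}. proper_coloring V A k (g(v := i))} = {}"
proof -
  have "\<not> proper_coloring (V - {v}) (A \<inter> (V - {v}) \<times> (V - {v})) k (g(v := i))" for i
    using assms(2) proper_coloring_cong[of "V - {v}" g "g(v := i)"] by auto
  then show ?thesis using proper_coloring_induced[of V A k _ "V - {v}"] by blast
qed

lemma card_proper_extensions_le:
  assumes T: "tournament V A" and "cyclic_triangle A v p q" "g p = g q" "g p \<in> {1..k}"
  shows "card {i \<in> {1..k}. proper_coloring V A k (g(v := i))} \<le> k - 1"
proof -
  have "p \<noteq> v" "q \<noteq> v" using cyclic_triangle_vertices[OF T assms(2)] by auto
  then have "{i \<in> {1..k}. proper_coloring V A k (g(v := i))} \<subseteq> {1..k} - {g p}"
    using assms proper_coloring_iff_no_monochromatic_triangle[OF T] by fastforce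
  then have "card {i \<in> {1..k}. proper_coloring V A k (g(v := i))} \<le> card ({1..k} - {g p})"
    by (rule card_mono[rotated]) simp
  then show ?thesis using assms(4) by simp
qed

text \<open>Bound on the number of colours of \<open>v\<close> extending a colouring \<open>g\<close> of \<open>V - {v}\<close>, where
  \<open>v \<rightarrow> x \<rightarrow> y \<rightarrow> v\<close>: there are none unless \<open>g\<close> is proper, and the colour \<open>g x\<close> is lost
  when \<open>g x = g y\<close>.\<close>
definition extension_bound :: "'a set \<Rightarrow> 'a rel \<Rightarrow> nat \<Rightarrow> 'a \<Rightarrow> 'a \<Rightarrow> ('a \<Rightarrow> nat) \<Rightarrow> nat" where
  "extension_bound S A k x y g =
     (if proper_coloring S A k g then k - 1 else 0) + (if g x \<noteq> g y then 1 else 0)"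

lemma sum_extension_bound:
  assumes "finite S" "x \<in> S" "y \<in> S" "x \<noteq> y"
  shows "(\<Sum>g\<in>S \<rightarrow>\<^sub>E {1..k}. extension_bound S A k x y g)
           = (k - 1) * chrom_poly S A k + (k - 1) * k ^ (card S - 1)"
proof -
  have "(\<Sum>g\<in>S \<rightarrow>\<^sub>E {1..k}. extension_bound S A k x y g)
      = (k - 1) * chrom_poly S A k + card {g \<in> S \<rightarrow>\<^sub>E {1..k}. g x \<noteq> g y}"
    using assms(1) unfolding extension_bound_def chrom_poly_def
    by (simp add: sum.distrib sum.If_cases finite_PiE Int_def)
  then show ?thesis using card_PiE_neq[OF assms(1) _ assms(2-4), of "{1..k}"] by simp
qed

lemma card_proper_extensions_le_bound:
  assumes T: "tournament V A" and t: "cyclic_triangle A v x y" and g: "g \<in> V - {v} \<rightarrow>\<^sub>E {1..k}"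
  defines "S \<equiv> V - {v}"
  shows "card {i \<in> {1..k}. proper_coloring V A k (g(v := i))} \<le> extension_bound S (A \<inter> S \<times> S) k x y g"
proof (cases "proper_coloring S (A \<inter> S \<times> S) k g")
  case False
  have none: "{i \<in> {1..k}. proper_coloring V A k (g(v := i))} = {}"
    by (rule proper_extensions_empty[OF cyclic_triangle_vertices(1)[OF T t] False[unfolded S_def]])
  show ?thesis unfolding none by simp
next
  case proper: True
  show ?thesis
  proof (cases "g x = g y")
    case True
    moreover have "x \<in> V - {v}" using cyclic_triangle_vertices[OF T t] by simp
    then have "g x \<in> {1..k}" using g by (rule PiE_mem[rotated])
    ultimately have "card {i \<in> {1..k}. proper_coloring V A k (g(v := i))} \<le> k - 1"
      by (rule card_proper_extensions_le[OF T t])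
    then show ?thesis using proper True unfolding extension_bound_def by simp
  next
    case False
    have "card {i \<in> {1..k}. proper_coloring V A k (g(v := i))} \<le> card {1..k}"
      by (rule card_mono) (simp, blast)
    then show ?thesis using proper False unfolding extension_bound_def by simp
  qed
qed

lemma exists_coloring_below_extension_bound:
  assumes T: "tournament V A" and t: "cyclic_triangle A v x y"
    and bad: "cyclic_triangle A a b d" "\<not> (x \<in> {a, b, d} \<and> y \<in> {a, b, d})" and "k \<ge> 2"
  defines "S \<equiv> V - {v}"
  shows "\<exists>g\<in>S \<rightarrow>\<^sub>E {1..k}.
           card {i \<in> {1..k}. proper_coloring V A k (g(v := i))} < extension_bound S (A \<inter> S \<times> S) k x y g"
proof -
  have xy: "x \<in> S" "y \<in> S" "x \<noteq> y"
    using cyclic_triangle_vertices[OF T t] unfolding S_def by auto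
  define u where "u = (if x \<in> {a, b, d} then y else x)"
  define g where "g = restrict (\<lambda>z. if z = u then 2 else 1::nat) S"
  have g: "g \<in> S \<rightarrow>\<^sub>E {1..k}" unfolding g_def using \<open>k \<ge> 2\<close> by auto
  have "g x \<noteq> g y" unfolding g_def u_def using xy by auto
  have g1: "g z = 1" if "z \<in> {a, b, d} - {v}" for z
    using that cyclic_triangle_vertices(1-3)[OF T bad(1)] bad(2) unfolding g_def u_def S_def by auto
  show ?thesis
  proof (cases "proper_coloring S (A \<inter> S \<times> S) k g")
    case False
    have none: "{i \<in> {1..k}. proper_coloring V A k (g(v := i))} = {}"
      by (rule proper_extensions_empty[OF cyclic_triangle_vertices(1)[OF T t] False[unfolded S_def]])
    show ?thesis
      by (rule bexI[OF _ g]) (unfold none extension_bound_def, simp add: False \<open>g x \<noteq> g y\<close>)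
  next
    case True
    have "v \<in> {a, b, d}"
    proof (rule ccontr)
      assume "v \<notin> {a, b, d}"
      then have "cyclic_triangle (A \<inter> S \<times> S) a b d"
        using bad(1) cyclic_triangle_vertices(1-3)[OF T bad(1)] unfolding cyclic_triangle_def S_def by auto
      moreover have "g a = g b \<and> g b = g d" using g1[of a] g1[of b] g1[of d] \<open>v \<notin> {a, b, d}\<close> by auto
      moreover have "tournament S (A \<inter> S \<times> S)" using tournament_induced[OF T] unfolding S_def by blast
      ultimately show False
        using True[unfolded proper_coloring_iff_no_monochromatic_triangle[OF \<open>tournament S _\<close>]] by blast
    qed
    then obtain p q where pq: "cyclic_triangle A v p q" "{v, p, q} = {a, b, d}"
      using cyclic_triangle_through[OF bad(1)] by blast
    moreover have "p \<noteq> v" "q \<noteq> v" using cyclic_triangle_vertices[OF T pq(1)] by auto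
    ultimately have "g p = 1" "g q = 1" using g1 by auto
    then have "card {i \<in> {1..k}. proper_coloring V A k (g(v := i))} \<le> k - 1"
      using card_proper_extensions_le[OF T pq(1)] \<open>k \<ge> 2\<close> by simp
    moreover have "extension_bound S (A \<inter> S \<times> S) k x y g = k"
      using True \<open>g x \<noteq> g y\<close> \<open>k \<ge> 2\<close> unfolding extension_bound_def by simp
    ultimately show ?thesis using g \<open>k \<ge> 2\<close> by (intro bexI[OF _ g]) simp
  qed
qed

lemma chrom_poly_remove_vertex_le:
  assumes T: "tournament V A" and "finite V" and t: "cyclic_triangle A v x y"
  defines "S \<equiv> V - {v}"
  shows "chrom_poly V A k \<le> (k - 1) * chrom_poly S (A \<inter> S \<times> S) k + (k - 1) * k ^ (card V - 2)"
proof -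
  have v: "v \<in> V" and xy: "x \<in> S" "y \<in> S" "x \<noteq> y"
    using cyclic_triangle_vertices[OF T t] unfolding S_def by auto
  have "chrom_poly V A k = (\<Sum>g\<in>S \<rightarrow>\<^sub>E {1..k}. card {i \<in> {1..k}. proper_coloring V A k (g(v := i))})"
    unfolding S_def by (rule chrom_poly_sum_extensions[OF \<open>finite V\<close> v])
  also have "\<dots> \<le> (\<Sum>g\<in>S \<rightarrow>\<^sub>E {1..k}. extension_bound S (A \<inter> S \<times> S) k x y g)"
    by (rule sum_mono) (use card_proper_extensions_le_bound[OF T t] in \<open>simp add: S_def\<close>)
  also have "\<dots> = (k - 1) * chrom_poly S (A \<inter> S \<times> S) k + (k - 1) * k ^ (card V - 2)"
    using sum_extension_bound[of S x y] \<open>finite V\<close> xy v unfolding S_def by (simp add: numeral_2_eq_2)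
  finally show ?thesis .
qed

lemma chrom_poly_remove_vertex_less:
  assumes T: "tournament V A" and "finite V" and t: "cyclic_triangle A v x y"
    and bad: "cyclic_triangle A a b d" "\<not> (x \<in> {a, b, d} \<and> y \<in> {a, b, d})" and "k \<ge> 2"
  defines "S \<equiv> V - {v}"
  shows "chrom_poly V A k < (k - 1) * chrom_poly S (A \<inter> S \<times> S) k + (k - 1) * k ^ (card V - 2)"
proof -
  have v: "v \<in> V" and xy: "x \<in> S" "y \<in> S" "x \<noteq> y"
    using cyclic_triangle_vertices[OF T t] unfolding S_def by auto
  have "chrom_poly V A k = (\<Sum>g\<in>S \<rightarrow>\<^sub>E {1..k}. card {i \<in> {1..k}. proper_coloring V A k (g(v := i))})"
    unfolding S_def by (rule chrom_poly_sum_extensions[OF \<open>finite V\<close> v])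
  also have "\<dots> < (\<Sum>g\<in>S \<rightarrow>\<^sub>E {1..k}. extension_bound S (A \<inter> S \<times> S) k x y g)"
    using exists_coloring_below_extension_bound[OF T t bad \<open>k \<ge> 2\<close>]
      card_proper_extensions_le_bound[OF T t] \<open>finite V\<close>
    unfolding S_def by (intro sum_strict_mono_ex1) (auto simp: finite_PiE)
  also have "\<dots> = (k - 1) * chrom_poly S (A \<inter> S \<times> S) k + (k - 1) * k ^ (card V - 2)"
    using sum_extension_bound[of S x y] \<open>finite V\<close> xy v unfolding S_def by (simp add: numeral_2_eq_2)
  finally show ?thesis .
qed

section \<open>An upper bound for strong tournaments\<close>

text \<open>The number of colourings of \<open>D\<^sub>n\<close> with \<open>c 1 \<noteq> c n\<close>, plus those with \<open>c 1 = c n\<close> and no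
  other vertex of that colour; this is exactly \<open>P(D\<^sub>n; k)\<close>, but only \<open>\<le>\<close> is needed.\<close>
definition D_count :: "nat \<Rightarrow> nat \<Rightarrow> nat" where
  "D_count k n = (k - 1) * k ^ (n - 1) + k * (k - 1) ^ (n - 2)"

lemma D_count_Suc:
  "k \<ge> 1 \<Longrightarrow> n \<ge> 2 \<Longrightarrow> D_count k (Suc n) = (k - 1) * D_count k n + (k - 1) * k ^ (n - 1)"
proof -
  assume "k \<ge> 1" "n \<ge> 2"
  obtain s where k: "k = Suc s" using \<open>k \<ge> 1\<close> by (cases k) auto
  obtain j where n: "n = Suc (Suc j)" using \<open>n \<ge> 2\<close> by (metis add_2_eq_Suc le_Suc_ex)
  show ?thesis unfolding D_count_def k n by (simp add: algebra_simps)
qed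

lemma D_count_2: "k \<ge> 1 \<Longrightarrow> D_count k 2 = k ^ 2"
  unfolding D_count_def by (cases k) (auto simp: algebra_simps power2_eq_square)

lemma chrom_poly_le_power: "finite V \<Longrightarrow> chrom_poly V A k \<le> k ^ card V"
proof -
  assume "finite V"
  then have "chrom_poly V A k \<le> card (V \<rightarrow>\<^sub>E {1..k})"
    unfolding chrom_poly_def by (intro card_mono) (auto simp: finite_PiE)
  then show ?thesis using \<open>finite V\<close> by (simp add: card_PiE)
qed

lemma chrom_poly_le_D_count:
  assumes "k \<ge> 1"
  shows "tournament V A \<Longrightarrow> finite V \<Longrightarrow> card V \<ge> 2 \<Longrightarrow> card V = 2 \<or> strongly_connected V A \<Longrightarrow>
           chrom_poly V A k \<le> D_count k (card V)"
proof (induction "card V" arbitrary: V A rule: less_induct)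
  case less
  note T = less.prems(1) and fin = less.prems(2)
  show ?case
  proof (cases "card V = 2")
    case True
    then show ?thesis using chrom_poly_le_power[OF fin] D_count_2[OF assms] by simp
  next
    case False
    with less.prems have "card V \<ge> 3" "strongly_connected V A" by auto
    then obtain v x y where t: "cyclic_triangle A v x y" and
      del: "card (V - {v}) = 2 \<or> strongly_connected (V - {v}) (A \<inter> (V - {v}) \<times> (V - {v}))"
      using strong_tournament_deletable_triangle_vertex[OF T _ fin] by blast
    let ?S = "V - {v}"
    have card_S: "card ?S = card V - 1" using cyclic_triangle_vertices(1)[OF T t] fin by simp
    have "chrom_poly ?S (A \<inter> ?S \<times> ?S) k \<le> D_count k (card ?S)"
    proof (rule less.hyps)
      show "card ?S < card V" using card_S \<open>card V \<ge> 3\<close> by simp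
      show "tournament ?S (A \<inter> ?S \<times> ?S)" using tournament_induced[OF T] by blast
    qed (use fin card_S \<open>card V \<ge> 3\<close> del in auto)
    then have IH: "chrom_poly ?S (A \<inter> ?S \<times> ?S) k \<le> D_count k (card V - 1)" using card_S by simp
    have "chrom_poly V A k \<le> (k - 1) * chrom_poly ?S (A \<inter> ?S \<times> ?S) k + (k - 1) * k ^ (card V - 2)"
      by (rule chrom_poly_remove_vertex_le[OF T fin t])
    also have "\<dots> \<le> (k - 1) * D_count k (card V - 1) + (k - 1) * k ^ (card V - 2)"
      using IH by simp
    also have "\<dots> = D_count k (card V)"
      using D_count_Suc[OF assms, of "card V - 1"] \<open>card V \<ge> 3\<close> by (simp add: Suc_diff_le numeral_2_eq_2)
    finally show ?thesis .
  qed
qed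

section \<open>The tournament \<open>D\<^sub>n\<close>\<close>

lemma tournament_D_arcs: "tournament {1..n} (D_arcs n)"
  unfolding tournament_def D_arcs_def by auto

lemma cyclic_triangle_D_arcs:
  assumes "cyclic_triangle (D_arcs n) a b d"
  shows "\<exists>j. 1 < j \<and> j < n \<and> {a, b, d} = {1, j, n}"
proof -
  have "1 \<le> a \<and> a \<le> n \<and> 1 \<le> b \<and> b \<le> n \<and> ((a < b \<and> \<not> (a = 1 \<and> b = n)) \<or> (a = n \<and> b = 1 \<and> 1 < n))"
    "1 \<le> b \<and> b \<le> n \<and> 1 \<le> d \<and> d \<le> n \<and> ((b < d \<and> \<not> (b = 1 \<and> d = n)) \<or> (b = n \<and> d = 1 \<and> 1 < n))"
    "1 \<le> d \<and> d \<le> n \<and> 1 \<le> a \<and> a \<le> n \<and> ((d < a \<and> \<not> (d = 1 \<and> a = n)) \<or> (d = n \<and> a = 1 \<and> 1 < n))"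
    using assms unfolding cyclic_triangle_def D_arcs_def by auto
  then have "(a = n \<and> b = 1 \<and> 1 < d \<and> d < n) \<or> (b = n \<and> d = 1 \<and> 1 < a \<and> a < n) \<or>
      (d = n \<and> a = 1 \<and> 1 < b \<and> b < n)"
    by presburger
  then show ?thesis by blast
qed

lemma D_count_le_chrom_poly_D_arcs:
  assumes "n \<ge> 2"
  shows "D_count k n \<le> chrom_poly {1..n} (D_arcs n) k"
proof -
  let ?P = "{1..n} \<rightarrow>\<^sub>E {1..k}"
  let ?C1 = "{c \<in> ?P. c 1 \<noteq> c n}"
  let ?C2 = "{c \<in> ?P. c 1 = c n \<and> (\<forall>j\<in>{1..n} - {1, n}. c j \<noteq> c 1)}"
  have ends: "1 \<in> {1..n}" "n \<in> {1..n}" "1 \<noteq> n" using assms by auto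
  have "proper_coloring {1..n} (D_arcs n) k c" if c: "c \<in> ?C1 \<union> ?C2" for c
    unfolding proper_coloring_iff_no_monochromatic_triangle[OF tournament_D_arcs]
  proof (intro conjI allI impI notI)
    show "\<forall>v\<in>{1..n}. c v \<in> {1..k}" using c by auto
    fix a b d assume "cyclic_triangle (D_arcs n) a b d" "c a = c b \<and> c b = c d"
    moreover obtain j where "1 < j" "j < n" "{a, b, d} = {1, j, n}"
      using cyclic_triangle_D_arcs[OF calculation(1)] by blast
    ultimately have "c 1 = c n" "c j = c 1" by (metis insertCI insertE singletonD)+
    then show False using c \<open>1 < j\<close> \<open>j < n\<close> by auto
  qed
  then have "?C1 \<union> ?C2 \<subseteq> {c \<in> ?P. proper_coloring {1..n} (D_arcs n) k c}" by blast
  then have "card (?C1 \<union> ?C2) \<le> chrom_poly {1..n} (D_arcs n) k"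
    unfolding chrom_poly_def by (rule card_mono[rotated]) (simp add: finite_PiE)
  moreover have "card (?C1 \<union> ?C2) = card ?C1 + card ?C2"
    by (rule card_Un_disjoint) (simp_all add: finite_PiE, blast)
  ultimately show ?thesis
    using card_PiE_neq[OF _ _ ends, of "{1..k}"] card_PiE_eq_avoiding[OF _ _ ends, of "{1..k}"]
    unfolding D_count_def by simp
qed

lemma D_arcs_iff:
  assumes "n \<ge> 3" "i \<in> {1..n}" "j \<in> {1..n}"
  shows "(i, j) \<in> D_arcs n \<longleftrightarrow> (i < j \<and> (i, j) \<noteq> (1, n)) \<or> (i = n \<and> j = 1)"
  using assms unfolding D_arcs_def by auto

lemma tournament_indegree_order:
  assumes T: "tournament M A" and "finite M" and no_triangle: "\<nexists>a b c. cyclic_triangle A a b c"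
  defines "r z \<equiv> card {w \<in> M. (w, z) \<in> A}"
  shows "\<And>z z'. z \<in> M \<Longrightarrow> z' \<in> M \<Longrightarrow> (z, z') \<in> A \<longleftrightarrow> r z < r z'"
    and "bij_betw r M {..<card M}"
proof -
  have less: "r z < r z'" if "(z, z') \<in> A" for z z'
  proof -
    have "{w \<in> M. (w, z) \<in> A} \<subseteq> {w \<in> M. (w, z') \<in> A}"
    proof safe
      fix w assume "w \<in> M" "(w, z) \<in> A"
      then have "w \<noteq> z'" using that tournament_asym[OF T] by blast
      moreover have "(z', w) \<notin> A"
        using no_triangle \<open>(w, z) \<in> A\<close> that unfolding cyclic_triangle_def by blast
      ultimately show "(w, z') \<in> A"
        using tournament_total[OF T] tournament_arcD[OF T that] \<open>w \<in> M\<close> by blast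
    qed
    moreover have "z \<in> {w \<in> M. (w, z') \<in> A} - {w \<in> M. (w, z) \<in> A}"
      using that tournament_arcD[OF T] tournament_irrefl[OF T] by auto
    ultimately show ?thesis
      unfolding r_def using \<open>finite M\<close> by (intro psubset_card_mono) auto
  qed
  show order: "(z, z') \<in> A \<longleftrightarrow> r z < r z'" if "z \<in> M" "z' \<in> M" for z z'
    using less[of z z'] less[of z' z] tournament_total[OF T that] by fastforce
  have "inj_on r M"
    by (rule inj_onI) (metis order less_irrefl tournament_total[OF T])
  moreover have "r ` M \<subseteq> {..<card M}"
  proof
    fix n assume "n \<in> r ` M"
    then obtain z where "z \<in> M" "n = r z" by blast
    have "{w \<in> M. (w, z) \<in> A} \<subset> M" using \<open>z \<in> M\<close> tournament_irrefl[OF T] by blast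
    then show "n \<in> {..<card M}" unfolding \<open>n = r z\<close> r_def using \<open>finite M\<close> by (simp add: psubset_card_mono)
  qed
  ultimately show "bij_betw r M {..<card M}"
    unfolding bij_betw_def by (simp add: card_image card_subset_eq)
qed

lemma arc_in_all_triangles_between:
  assumes T: "tournament V A" and SC: "strongly_connected V A"
    and xy: "(x, y) \<in> A" and all: "\<forall>a b d. cyclic_triangle A a b d \<longrightarrow> x \<in> {a, b, d} \<and> y \<in> {a, b, d}"
    and z: "z \<in> V - {x, y}"
  shows "(y, z) \<in> A \<and> (z, x) \<in> A"
proof -
  have "x \<in> V" "x \<noteq> y" using tournament_arcD[OF T xy] tournament_irrefl[OF T] xy by auto
  obtain p q where t: "cyclic_triangle A z p q"
    using strongly_connected_vertex_on_triangle[OF T SC, of z x] z \<open>x \<in> V\<close> by blast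
  moreover have "x \<in> {z, p, q}" "y \<in> {z, p, q}" using all t by blast+
  ultimately have "(p = x \<and> q = y) \<or> (p = y \<and> q = x)"
    using cyclic_triangle_vertices[OF T t] \<open>x \<noteq> y\<close> z by auto
  then show ?thesis
    using t xy tournament_asym[OF T] unfolding cyclic_triangle_def by blast
qed

lemma digraph_iso_D_arcs_if_triangles_contain_arc:
  assumes T: "tournament V A" and SC: "strongly_connected V A" and "finite V" "card V = n" "n \<ge> 3"
    and xy: "(x, y) \<in> A" and all: "\<forall>a b d. cyclic_triangle A a b d \<longrightarrow> x \<in> {a, b, d} \<and> y \<in> {a, b, d}"
  shows "digraph_iso V A {1..n} (D_arcs n)"
proof -
  define M where "M = V - {x, y}"
  have "x \<in> V" "y \<in> V" "x \<noteq> y" using tournament_arcD[OF T xy] tournament_irrefl[OF T] xy by auto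
  then have V: "V = insert y (insert x M)" and "x \<notin> M" "y \<notin> M" unfolding M_def by auto
  have "finite M" "card M = n - 2"
    using \<open>finite V\<close> \<open>card V = n\<close> \<open>x \<in> V\<close> \<open>y \<in> V\<close> \<open>x \<noteq> y\<close> unfolding M_def by (auto simp: card_Diff_subset)
  have between: "(y, z) \<in> A \<and> (z, x) \<in> A" if "z \<in> M" for z
    using arc_in_all_triangles_between[OF T SC xy all] that unfolding M_def by blast
  let ?AM = "A \<inter> M \<times> M"
  define r where "r z = card {w \<in> M. (w, z) \<in> ?AM}" for z
  have "\<nexists>a b c. cyclic_triangle ?AM a b c"
    using all \<open>x \<notin> M\<close> unfolding cyclic_triangle_def by blast
  note indegree = tournament_indegree_order[OF tournament_induced[OF T] \<open>finite M\<close> this, folded r_def,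
    OF Diff_subset[of V "{x, y}", folded M_def]]
  define f where "f z = (if z = y then 1 else if z = x then n else r z + 2)" for z
  have f: "f y = 1" "f x = n" "z \<in> M \<Longrightarrow> f z = r z + 2" for z
    unfolding f_def using \<open>x \<noteq> y\<close> \<open>x \<notin> M\<close> \<open>y \<notin> M\<close> by auto
  have "r ` M = {..<n - 2}" using indegree(2) \<open>card M = n - 2\<close> by (simp add: bij_betw_def)
  moreover have "f ` M = (\<lambda>m. m + 2) ` r ` M" using f(3) by (simp add: image_image)
  ultimately have "f ` M = {0 + 2..<n - 2 + 2}"
    by (simp only: lessThan_atLeast0 image_add_atLeastLessThan')
  moreover have "n - 2 + 2 = n" using \<open>n \<ge> 3\<close> by simp
  ultimately have "f ` M = {2..<n}" by (simp only: add_0)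
  then have "f ` V = {1..n}" using f V \<open>n \<ge> 3\<close> by auto
  moreover have "inj_on f V"
    using \<open>finite V\<close> \<open>card V = n\<close> \<open>f ` V = {1..n}\<close> by (simp add: eq_card_imp_inj_on)
  moreover have "(u, w) \<in> A \<longleftrightarrow> (f u, f w) \<in> D_arcs n" if "u \<in> V" "w \<in> V" for u w
  proof -
    have fM: "2 \<le> f z \<and> f z < n" if "z \<in> M" for z using \<open>f ` M = {2..<n}\<close> that by auto
    have order: "(z, z') \<in> A \<longleftrightarrow> f z < f z'" if "z \<in> M" "z' \<in> M" for z z'
      using indegree(1)[OF that] f(3) that by simp
    have "f u \<in> {1..n}" "f w \<in> {1..n}" using that \<open>f ` V = {1..n}\<close> by auto
    then have D: "(f u, f w) \<in> D_arcs n \<longleftrightarrow> (f u < f w \<and> (f u, f w) \<noteq> (1, n)) \<or> (f u = n \<and> f w = 1)"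
      by (rule D_arcs_iff[OF \<open>n \<ge> 3\<close>])
    have "u = y \<or> u = x \<or> u \<in> M" "w = y \<or> w = x \<or> w \<in> M" using that V by auto
    then show ?thesis
      unfolding D
      using f(1,2) fM[of u] fM[of w] order[of u w] between[of u] between[of w] xy
        tournament_asym[OF T] tournament_irrefl[OF T] \<open>n \<ge> 3\<close>
      by (elim disjE) auto
  qed
  ultimately show ?thesis unfolding digraph_iso_def bij_betw_def by blast
qed

lemma digraph_iso_D_arcs_1:
  assumes "tournament V A" "card V = 1"
  shows "digraph_iso V A {1..1} (D_arcs 1)"
proof -
  obtain a where "V = {a}" using assms(2) card_1_singletonE by blast
  moreover have "(a, a) \<notin> A" using tournament_irrefl[OF assms(1)] .
  moreover have "(1, 1) \<notin> D_arcs 1" unfolding D_arcs_def by simp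
  ultimately show ?thesis unfolding digraph_iso_def bij_betw_def by (intro exI[of _ "\<lambda>_. 1"]) simp
qed

theorem mainTheorem13:
  fixes V :: "'a set" and A :: "'a rel" and n k :: nat
  assumes "n \<ge> 1"
    and "finite V" and "card V = n"
    and "tournament V A"
    and "strongly_connected V A"
    and "\<not> digraph_iso V A {1..n} (D_arcs n)"
    and "k > 1"
  shows "chrom_poly V A k < chrom_poly {1..n} (D_arcs n) k"
proof -
  note T = assms(4) and SC = assms(5)
  have "n \<noteq> 1" using digraph_iso_D_arcs_1[OF T] assms(3,6) by blast
  moreover have "n \<noteq> 2" using not_strongly_connected_card_2[OF T] assms(3,5) by blast
  ultimately have "n \<ge> 3" using \<open>n \<ge> 1\<close> by linarith
  then obtain v x y where t: "cyclic_triangle A v x y" and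
    del: "card (V - {v}) = 2 \<or> strongly_connected (V - {v}) (A \<inter> (V - {v}) \<times> (V - {v}))"
    using strong_tournament_deletable_triangle_vertex[OF T SC \<open>finite V\<close>] assms(3) by blast
  let ?S = "V - {v}"
  have card_S: "card ?S = n - 1" using cyclic_triangle_vertices(1)[OF T t] assms(2,3) by simp
  have "chrom_poly ?S (A \<inter> ?S \<times> ?S) k \<le> D_count k (card ?S)"
    by (rule chrom_poly_le_D_count[OF _ tournament_induced[OF T]]) (use assms card_S \<open>n \<ge> 3\<close> del in auto)
  then have S_bound: "chrom_poly ?S (A \<inter> ?S \<times> ?S) k \<le> D_count k (n - 1)" using card_S by simp
  have "(x, y) \<in> A" using t unfolding cyclic_triangle_def by blast
  then obtain a b d where bad: "cyclic_triangle A a b d" "\<not> (x \<in> {a, b, d} \<and> y \<in> {a, b, d})"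
    using digraph_iso_D_arcs_if_triangles_contain_arc[OF T SC assms(2,3) \<open>n \<ge> 3\<close>] assms(6) by blast
  have "chrom_poly V A k < (k - 1) * chrom_poly ?S (A \<inter> ?S \<times> ?S) k + (k - 1) * k ^ (n - 2)"
    using chrom_poly_remove_vertex_less[OF T assms(2) t bad] assms(3,7) by simp
  also have "\<dots> \<le> (k - 1) * D_count k (n - 1) + (k - 1) * k ^ (n - 2)"
    using S_bound by simp
  also have "\<dots> = D_count k n"
    using D_count_Suc[of k "n - 1"] \<open>n \<ge> 3\<close> assms(7) by (simp add: Suc_diff_le numeral_2_eq_2)
  also have "\<dots> \<le> chrom_poly {1..n} (D_arcs n) k"
    using D_count_le_chrom_poly_D_arcs \<open>n \<ge> 3\<close> by simp
  finally show ?thesis .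
qed

end
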